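(* Let $G^S$ be a cycle on $n\ge 3$ state nodes, and let the network $\mathcal G=G^S\cup G^I$ have exactly two external input nodes $u_1,u_2$, attached to distinct state nodes $v_1,v_2$. Then $\mathcal G$ is strongly structurally controllable if and only if $v_1$ and $v_2$ are adjacent in $G^S$.
   Context: Network model: a network $\mathcal G=G^S\cup G^I$ consists of an undirected simple state graph $G^S$ on state nodes $\{1,\dots,n\}$ and a set of $m$ external input nodes $u_1,\dots,u_m$, where each input node $u_r$ has exactly one directed edge, to a state node $v_r$, and the $v_r$ are pairwise distinct; the input matrix is $B=[e_{v_1},\dots,e_{v_m}]\in\mathbb R^{n\times m}$. The dynamics are $\dot x=Mx+Bu$, where $M$ ranges over the family $Q(G^S)$ of symmetric matrices with $M_{ij}=a_{ij}>0$ if $\{i,j\}$ is an edge of $G^S$, $M_{ij}=0$ if $i\ne j$ are non-adjacent, and $M_{ii}=-\sum_{j\in\mathcal N_i}a_{ij}+a_{ii}$ with an arbitrary self-loop weight $a_{ii}<0$ ($\mathcal N_i$ the neighbours of $i$ in $G^S$). The network is strongly structurally controllable (SSC) if for every $M\in Q(G^S)$ the controllability matrix $[B,MB,\dots,M^{n-1}B]$ has rank $n$. *)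

theory Defs
  imports "Jordan_Normal_Form.DL_Rank"
begin

definition simple_graph :: "nat \<Rightarrow> (nat \<Rightarrow> nat \<Rightarrow> bool) \<Rightarrow> bool" where
  "simple_graph n E \<longleftrightarrow>
     (\<forall>i j. E i j \<longrightarrow> i < n \<and> j < n \<and> i \<noteq> j) \<and> (\<forall>i j. E i j \<longrightarrow> E j i)"

definition cycle_graph :: "nat \<Rightarrow> (nat \<Rightarrow> nat \<Rightarrow> bool) \<Rightarrow> bool" where
  "cycle_graph n E \<longleftrightarrow> simple_graph n E \<and>
     (\<forall>i<n. card {j. E i j} = 2) \<and> (\<forall>i<n. \<forall>j<n. E\<^sup>*\<^sup>* i j)"

definition qualified_matrix :: "nat \<Rightarrow> (nat \<Rightarrow> nat \<Rightarrow> bool) \<Rightarrow> real mat \<Rightarrow> bool" where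
  "qualified_matrix n E M \<longleftrightarrow> M \<in> carrier_mat n n \<and>
     (\<forall>i<n. \<forall>j<n. M $$ (i, j) = M $$ (j, i)) \<and>
     (\<forall>i<n. \<forall>j<n. i \<noteq> j \<longrightarrow> (E i j \<longrightarrow> M $$ (i, j) > 0) \<and> (\<not> E i j \<longrightarrow> M $$ (i, j) = 0)) \<and>
     (\<forall>i<n. \<exists>a::real. a < 0 \<and> M $$ (i, i) = - (\<Sum>j\<in>{j. j < n \<and> E i j}. M $$ (i, j)) + a)"

definition input_matrix :: "nat \<Rightarrow> nat list \<Rightarrow> real mat" where
  "input_matrix n vs = mat n (length vs) (\<lambda>(i, r). if i = vs ! r then 1 else 0)"

text \<open>Controllability matrix [B, MB, ..., M^(n-1) B]; column k*m + r is column r of M^k B.\<close>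
definition ctrb_matrix :: "nat \<Rightarrow> real mat \<Rightarrow> real mat \<Rightarrow> real mat" where
  "ctrb_matrix n M B = mat n (n * dim_col B)
     (\<lambda>(i, j). ((M ^\<^sub>m (j div dim_col B)) * B) $$ (i, j mod dim_col B))"

definition SSC :: "nat \<Rightarrow> (nat \<Rightarrow> nat \<Rightarrow> bool) \<Rightarrow> nat list \<Rightarrow> bool" where
  "SSC n E vs \<longleftrightarrow> (\<forall>M. qualified_matrix n E M \<longrightarrow>
      vec_space.rank n (ctrb_matrix n M (input_matrix n vs)) = n)"

end

theory Submission
  imports Defs
begin

text \<open>
  Since every admissible M is symmetric, the controllability matrix has full rank iff no nonzero
  y has all of y, M y, ..., M^(n-1) y vanishing at the input nodes.

  If v1 and v2 are adjacent, walk around the cycle starting with v2, v1. Reading the recurrence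
  M^(k+1) y = M (M^k y) at a vertex of the walk, whose predecessor and itself are already known
  to vanish, leaves a single term with positive coefficient, so its successor vanishes as well;
  after n steps y = 0.

  If they are not adjacent, they split the cycle into two arcs with nonempty interiors. The vector
  that is 1 on one arc, -1 on the other and 0 at v1, v2 is an eigenvector of a suitable admissible
  matrix, since at each zero entry its two neighbours cancel; all its iterates then vanish at the
  inputs.
\<close>

lemma real_vec_eq_0_if_scalar_prod_self:
  fixes y :: "real vec"
  assumes "y \<in> carrier_vec n" and "y \<bullet> y = 0"
  shows "y = 0\<^sub>v n"
  using assms conjugate_square_eq_0_vec[of y n] by (simp add: scalar_prod_def conjugate_vec_def)

lemma rank_eq_dim_imp_orthogonal_eq_0:
  fixes A :: "real mat"
  assumes A: "A \<in> carrier_mat n nc" and rank: "vec_space.rank n A = n"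
    and y: "y \<in> carrier_vec n" and orth: "\<forall>i<nc. col A i \<bullet> y = 0"
  shows "y = 0\<^sub>v n"
proof -
  interpret V: vec_space "TYPE(real)" n .
  have cols: "set (cols A) \<subseteq> carrier_vec n" using A cols_dim by blast
  obtain S where S: "maximal S (\<lambda>T. T \<subseteq> set (cols A) \<and> V.lin_indpt T)"
    using maximal_exists_superset[of "set (cols A)" "\<lambda>T. T \<subseteq> set (cols A) \<and> V.lin_indpt T" "{}"]
      V.finite_lin_indpt2 by auto
  have S_cols: "S \<subseteq> set (cols A)" and S_indpt: "V.lin_indpt S"
    using S unfolding maximal_def by auto
  have "V.basis S"
    using V.dim_li_is_basis[of S] S_cols S_indpt cols V.rank_card_indpt[OF A S] rank V.dim_is_n
    by (auto intro: finite_subset)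
  then have "carrier_vec n = V.span S" unfolding V.basis_def by simp
  also have "\<dots> \<subseteq> V.span (set (cols A))" using S_cols by (rule V.span_is_monotone)
  finally have "y \<in> V.span (set (cols A))" using y by auto
  moreover have "y \<in> V.orthogonal_complement (V.span (set (cols A)))"
    using V.in_orthogonal_complement_span[OF cols] orth y A
    by (auto simp: V.orthogonal_complement_def in_set_conv_nth comm_scalar_prod[of _ n])
  ultimately have "y \<bullet> y = 0" unfolding V.orthogonal_complement_def by blast
  then show ?thesis by (rule real_vec_eq_0_if_scalar_prod_self[OF y])
qed

lemma orthogonal_eq_0_imp_rank_eq_dim:
  fixes A :: "real mat"
  assumes A: "A \<in> carrier_mat n nc"
    and orth: "\<And>y. y \<in> carrier_vec n \<Longrightarrow> \<forall>i<nc. col A i \<bullet> y = 0 \<Longrightarrow> y = 0\<^sub>v n"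
  shows "vec_space.rank n A = n"
proof -
  interpret V: vec_space "TYPE(real)" n .
  define G where "G = A * transpose_mat A"
  have G: "G \<in> carrier_mat n n" using A by (simp add: G_def)
  have "det G \<noteq> 0"
  proof
    assume "det G = 0"
    then obtain v where v: "v \<in> carrier_vec n" "v \<noteq> 0\<^sub>v n" "G *\<^sub>v v = 0\<^sub>v n"
      using det_0_iff_vec_prod_zero_field[OF G] by auto
    define w where "w = transpose_mat A *\<^sub>v v"
    have w: "w \<in> carrier_vec nc" using A unfolding w_def carrier_vec_def by simp
    have "w \<bullet> w = v \<bullet> (A *\<^sub>v w)"
      using transpose_vec_mult_scalar[OF A w v(1)] by (simp add: w_def)
    also have "A *\<^sub>v w = G *\<^sub>v v" using A v by (simp add: G_def w_def)
    finally have "w = 0\<^sub>v nc" using v real_vec_eq_0_if_scalar_prod_self[OF w] by simp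
    then have "\<forall>i<nc. col A i \<bullet> v = 0"
      using A by (metis w_def index_mult_mat_vec index_zero_vec(1) carrier_matD
        transpose_carrier_mat row_transpose)
    then show False using orth v by blast
  qed
  then obtain B where B: "B \<in> carrier_mat n n" "G * B = 1\<^sub>m n"
    using det_non_zero_imp_unit[OF G, of "()"] unfolding Units_def ring_mat_def by auto
  have cols: "set (cols A) \<subseteq> carrier_vec n" using A cols_dim by blast
  have "carrier_vec n \<subseteq> V.span (set (cols A))"
  proof
    fix x :: "real vec" assume x: "x \<in> carrier_vec n"
    define u where "u = transpose_mat A *\<^sub>v (B *\<^sub>v x)"
    have "x = (G * B) *\<^sub>v x" using B x by simp
    also have "\<dots> = G *\<^sub>v (B *\<^sub>v x)" by (rule assoc_mult_mat_vec[OF G B(1) x])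
    also have "\<dots> = A *\<^sub>v u" unfolding G_def u_def using A B x by (subst assoc_mult_mat_vec) auto
    also have "\<dots> = V.lincomb_list (\<lambda>i. u $ i) (cols A)"
    proof -
      have "vec (length (cols A)) (\<lambda>i. u $ i) = u" using A by (auto simp: u_def)
      then show ?thesis
        using V.lincomb_list_as_mat_mult[of "cols A" "\<lambda>i. u $ i"] cols A mat_of_cols_cols[of A]
        by (auto simp: subset_iff)
    qed
    finally show "x \<in> V.span (set (cols A))"
      using V.in_span_listI V.span_list_as_span[OF cols] by metis
  qed
  then have "V.span (set (cols A)) = carrier_vec n" using V.span_closed[OF cols] by auto
  then show ?thesis unfolding V.rank_def using V.dim_is_n by (simp add: module_vec_def)
qed

lemma rank_eq_dim_iff_orthogonal_eq_0:
  fixes A :: "real mat"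
  assumes "A \<in> carrier_mat n nc"
  shows "vec_space.rank n A = n \<longleftrightarrow>
    (\<forall>y\<in>carrier_vec n. (\<forall>i<nc. col A i \<bullet> y = 0) \<longrightarrow> y = 0\<^sub>v n)"
  using assms rank_eq_dim_imp_orthogonal_eq_0 orthogonal_eq_0_imp_rank_eq_dim by blast

lemma pow_mat_Suc_left:
  fixes A :: "'a :: comm_ring_1 mat"
  assumes "A \<in> carrier_mat n n"
  shows "A ^\<^sub>m Suc k = A * A ^\<^sub>m k"
proof (induction k)
  case 0 then show ?case using assms by simp
next
  case (Suc k)
  have "A ^\<^sub>m Suc (Suc k) = (A * A ^\<^sub>m k) * A" using Suc by simp
  also have "\<dots> = A * A ^\<^sub>m Suc k" using assms by (simp add: assoc_mult_mat[of _ n n _ n _ n])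
  finally show ?case .
qed

lemma transpose_pow_mat_symmetric:
  fixes A :: "'a :: comm_ring_1 mat"
  assumes "A \<in> carrier_mat n n" and "transpose_mat A = A"
  shows "transpose_mat (A ^\<^sub>m k) = A ^\<^sub>m k"
proof (induction k)
  case 0 then show ?case using assms by simp
next
  case (Suc k)
  then show ?case
    using assms transpose_mult[of "A ^\<^sub>m k" n n A n] pow_mat_Suc_left[OF assms(1)] by simp
qed

lemma pow_mat_Suc_mult_vec:
  fixes A :: "'a :: comm_ring_1 mat"
  assumes "A \<in> carrier_mat n n" and "y \<in> carrier_vec n"
  shows "A ^\<^sub>m Suc k *\<^sub>v y = A *\<^sub>v (A ^\<^sub>m k *\<^sub>v y)"
  unfolding pow_mat_Suc_left[OF assms(1)] using assms by (simp add: assoc_mult_mat_vec[of _ n n _ n])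

lemma pow_mat_mult_eigenvector:
  fixes A :: "'a :: field mat"
  assumes A: "A \<in> carrier_mat n n" and x: "x \<in> carrier_vec n" and eig: "A *\<^sub>v x = c \<cdot>\<^sub>v x"
  shows "A ^\<^sub>m k *\<^sub>v x = c ^ k \<cdot>\<^sub>v x"
proof (induction k)
  case 0 then show ?case using A x by simp
next
  case (Suc k)
  have "A ^\<^sub>m Suc k *\<^sub>v x = A ^\<^sub>m k *\<^sub>v (c \<cdot>\<^sub>v x)"
    using A x eig by (simp add: assoc_mult_mat_vec[of _ n n _ n])
  also have "\<dots> = c ^ Suc k \<cdot>\<^sub>v x"
    using mult_mat_vec[of "A ^\<^sub>m k" n n x c] A x Suc by (simp add: smult_smult_assoc)
  finally show ?case .
qed

lemma mult_input_matrix_index: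
  fixes A :: "real mat"
  assumes "A \<in> carrier_mat n n" and "i < n" and "r < length vs" and "vs ! r < n"
  shows "(A * input_matrix n vs) $$ (i, r) = A $$ (i, vs ! r)"
proof -
  have "(A * input_matrix n vs) $$ (i, r) = (\<Sum>l\<in>{0..<n}. A $$ (i, l) * (if l = vs ! r then 1 else 0))"
    using assms unfolding input_matrix_def by (simp add: scalar_prod_def)
  also have "\<dots> = (\<Sum>l\<in>{0..<n}. if l = vs ! r then A $$ (i, l) else 0)"
    by (intro sum.cong) auto
  also have "\<dots> = A $$ (i, vs ! r)" using assms(4) by simp
  finally show ?thesis .
qed

lemma col_ctrb_matrix_scalar_prod:
  fixes M :: "real mat"
  assumes M: "M \<in> carrier_mat n n" and vs: "set vs \<subseteq> {..<n}" and y: "y \<in> carrier_vec n"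
    and j: "j < n * length vs"
  shows "col (ctrb_matrix n M (input_matrix n vs)) j \<bullet> y
    = (transpose_mat (M ^\<^sub>m (j div length vs)) *\<^sub>v y) $ (vs ! (j mod length vs))"
proof -
  let ?k = "j div length vs" and ?r = "j mod length vs"
  have r: "?r < length vs" using j by (cases "length vs") auto
  then have vr: "vs ! ?r < n" using vs nth_mem by blast
  have Mk: "M ^\<^sub>m ?k \<in> carrier_mat n n" using M by simp
  have "col (ctrb_matrix n M (input_matrix n vs)) j \<bullet> y
      = (\<Sum>i\<in>{0..<n}. (M ^\<^sub>m ?k) $$ (i, vs ! ?r) * y $ i)"
    unfolding scalar_prod_def using y j mult_input_matrix_index[OF Mk _ r vr]
    by (auto simp: ctrb_matrix_def input_matrix_def intro!: sum.cong)
  also have "\<dots> = col (M ^\<^sub>m ?k) (vs ! ?r) \<bullet> y"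
    using M vr y by (auto simp: scalar_prod_def intro!: sum.cong)
  also have "\<dots> = row (transpose_mat (M ^\<^sub>m ?k)) (vs ! ?r) \<bullet> y"
    using Mk vr by (subst row_transpose) auto
  also have "\<dots> = (transpose_mat (M ^\<^sub>m ?k) *\<^sub>v y) $ (vs ! ?r)"
    using M vr by simp
  finally show ?thesis .
qed

lemma rank_ctrb_matrix_eq_dim_iff:
  fixes M :: "real mat"
  assumes M: "M \<in> carrier_mat n n" and vs: "set vs \<subseteq> {..<n}"
  shows "vec_space.rank n (ctrb_matrix n M (input_matrix n vs)) = n \<longleftrightarrow>
    (\<forall>y\<in>carrier_vec n. (\<forall>k<n. \<forall>v\<in>set vs. (transpose_mat (M ^\<^sub>m k) *\<^sub>v y) $ v = 0) \<longrightarrow> y = 0\<^sub>v n)"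
proof -
  let ?C = "ctrb_matrix n M (input_matrix n vs)" and ?m = "length vs"
  have C: "?C \<in> carrier_mat n (n * ?m)" unfolding ctrb_matrix_def input_matrix_def by simp
  have "(\<forall>j<n * ?m. col ?C j \<bullet> y = 0) \<longleftrightarrow>
      (\<forall>k<n. \<forall>v\<in>set vs. (transpose_mat (M ^\<^sub>m k) *\<^sub>v y) $ v = 0)"
    if y: "y \<in> carrier_vec n" for y
  proof
    assume orth: "\<forall>j<n * ?m. col ?C j \<bullet> y = 0"
    show "\<forall>k<n. \<forall>v\<in>set vs. (transpose_mat (M ^\<^sub>m k) *\<^sub>v y) $ v = 0"
    proof (intro allI impI ballI)
      fix k v assume k: "k < n" and "v \<in> set vs"
      then obtain r where r: "r < ?m" "v = vs ! r" by (auto simp: in_set_conv_nth)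
      have "k * ?m + r < Suc k * ?m" using r by simp
      also have "\<dots> \<le> n * ?m" using k by (intro mult_right_mono) auto
      finally have j: "k * ?m + r < n * ?m" .
      have "?m \<noteq> 0" using r by auto
      then have "(k * ?m + r) div ?m = k" and "(k * ?m + r) mod ?m = r" using r by simp_all
      then show "(transpose_mat (M ^\<^sub>m k) *\<^sub>v y) $ v = 0"
        using orth j col_ctrb_matrix_scalar_prod[OF M vs y j] r by simp
    qed
  next
    assume orbit: "\<forall>k<n. \<forall>v\<in>set vs. (transpose_mat (M ^\<^sub>m k) *\<^sub>v y) $ v = 0"
    show "\<forall>j<n * ?m. col ?C j \<bullet> y = 0"
    proof (intro allI impI)
      fix j assume j: "j < n * ?m"
      then have "j div ?m < n" and "j mod ?m < ?m"
        by (auto simp: less_mult_imp_div_less) (cases ?m; simp)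
      then show "col ?C j \<bullet> y = 0" using orbit col_ctrb_matrix_scalar_prod[OF M vs y j] by simp
    qed
  qed
  then show ?thesis unfolding rank_eq_dim_iff_orthogonal_eq_0[OF C] by blast
qed

lemma qualified_matrixD:
  assumes "qualified_matrix n E M"
  shows qualified_matrix_carrier: "M \<in> carrier_mat n n"
    and qualified_matrix_transpose: "transpose_mat M = M"
    and qualified_matrix_nonedge: "\<And>i l. i < n \<Longrightarrow> l < n \<Longrightarrow> l \<noteq> i \<Longrightarrow> \<not> E i l \<Longrightarrow> M $$ (i, l) = 0"
    and qualified_matrix_edge:
      "\<And>i l. simple_graph n E \<Longrightarrow> E i l \<Longrightarrow> M $$ (i, l) > 0"
  using assms unfolding qualified_matrix_def simple_graph_def by auto

lemma SSC_iff_vanishing_orbit_trivial: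
  assumes "set vs \<subseteq> {..<n}"
  shows "SSC n E vs \<longleftrightarrow> (\<forall>M. qualified_matrix n E M \<longrightarrow>
    (\<forall>y\<in>carrier_vec n. (\<forall>k<n. \<forall>v\<in>set vs. (M ^\<^sub>m k *\<^sub>v y) $ v = 0) \<longrightarrow> y = 0\<^sub>v n))"
proof -
  have "vec_space.rank n (ctrb_matrix n M (input_matrix n vs)) = n \<longleftrightarrow>
      (\<forall>y\<in>carrier_vec n. (\<forall>k<n. \<forall>v\<in>set vs. (M ^\<^sub>m k *\<^sub>v y) $ v = 0) \<longrightarrow> y = 0\<^sub>v n)"
    if "qualified_matrix n E M" for M
    using rank_ctrb_matrix_eq_dim_iff[OF qualified_matrix_carrier[OF that] assms]
      transpose_pow_mat_symmetric[OF qualified_matrix_carrier[OF that] qualified_matrix_transpose[OF that]]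
    by simp
  then show ?thesis unfolding SSC_def by blast
qed

lemma qualified_matrix_mult_vec_index:
  fixes x :: "real vec"
  assumes M: "qualified_matrix n E M" and E: "simple_graph n E"
    and i: "i < n" and x: "x \<in> carrier_vec n"
  shows "(M *\<^sub>v x) $ i = M $$ (i, i) * x $ i + (\<Sum>l | l < n \<and> E i l. M $$ (i, l) * x $ l)"
proof -
  have "(M *\<^sub>v x) $ i = (\<Sum>l\<in>{0..<n}. M $$ (i, l) * x $ l)"
    using qualified_matrix_carrier[OF M] i x by (simp add: scalar_prod_def)
  also have "\<dots> = M $$ (i, i) * x $ i + (\<Sum>l\<in>{0..<n} - {i}. M $$ (i, l) * x $ l)"
    using i by (subst sum.remove[of _ i]) auto
  also have "(\<Sum>l\<in>{0..<n} - {i}. M $$ (i, l) * x $ l) = (\<Sum>l | l < n \<and> E i l. M $$ (i, l) * x $ l)"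
    using E qualified_matrix_nonedge[OF M i] unfolding simple_graph_def
    by (intro sum.mono_neutral_right) auto
  finally show ?thesis .
qed

definition neighbour_sum :: "nat \<Rightarrow> (nat \<Rightarrow> nat \<Rightarrow> bool) \<Rightarrow> real vec \<Rightarrow> nat \<Rightarrow> real" where
  "neighbour_sum n E x i = (\<Sum>l | l < n \<and> E i l. x $ l)"

definition balanced_sign_vector :: "nat \<Rightarrow> (nat \<Rightarrow> nat \<Rightarrow> bool) \<Rightarrow> real vec \<Rightarrow> bool" where
  "balanced_sign_vector n E x \<longleftrightarrow> x \<in> carrier_vec n \<and> (\<forall>i<n. x $ i \<in> {-1, 0, 1}) \<and>
     (\<forall>i<n. x $ i = 0 \<longrightarrow> neighbour_sum n E x i = 0)"

text \<open>The diagonal entry cancels the neighbour sum in row i when x $ i = 1 or -1; the constant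
  -(2n+1) makes every self-loop weight negative.\<close>

definition balancing_matrix :: "nat \<Rightarrow> (nat \<Rightarrow> nat \<Rightarrow> bool) \<Rightarrow> real vec \<Rightarrow> real mat" where
  "balancing_matrix n E x = mat n n (\<lambda>(i, j).
     if i = j then - (2 * real n + 1) - x $ i * neighbour_sum n E x i else if E i j then 1 else 0)"

lemma sum_neighbours_balancing_matrix:
  assumes "simple_graph n E" and "i < n"
  shows "(\<Sum>l | l < n \<and> E i l. balancing_matrix n E x $$ (i, l) * f l) = (\<Sum>l | l < n \<and> E i l. f l)"
  using assms unfolding simple_graph_def by (intro sum.cong) (auto simp: balancing_matrix_def)

lemma qualified_balancing_matrix:
  assumes E: "simple_graph n E" and x: "\<forall>i<n. \<bar>x $ i\<bar> \<le> 1"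
  shows "qualified_matrix n E (balancing_matrix n E x)" (is "qualified_matrix n E ?M")
  unfolding qualified_matrix_def
proof (intro conjI allI impI)
  show "?M \<in> carrier_mat n n" by (simp add: balancing_matrix_def)
next
  fix i j assume "i < n" "j < n"
  then show "?M $$ (i, j) = ?M $$ (j, i)"
    using E unfolding simple_graph_def by (auto simp: balancing_matrix_def)
next
  fix i j assume "i < n" "j < n" "i \<noteq> j"
  then show "E i j \<Longrightarrow> ?M $$ (i, j) > 0" and "\<not> E i j \<Longrightarrow> ?M $$ (i, j) = 0"
    by (auto simp: balancing_matrix_def)
next
  fix i assume i: "i < n"
  let ?N = "{l. l < n \<and> E i l}"
  have deg: "card ?N \<le> n" using card_mono[of "{..<n}" ?N] by auto
  have "\<bar>neighbour_sum n E x i\<bar> \<le> (\<Sum>l\<in>?N. \<bar>x $ l\<bar>)" unfolding neighbour_sum_def by (rule sum_abs)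
  also have "\<dots> \<le> (\<Sum>l\<in>?N. 1)" using x by (intro sum_mono) auto
  also have "\<dots> \<le> n" using deg by simp
  finally have "\<bar>x $ i * neighbour_sum n E x i\<bar> \<le> n"
    using mult_mono[of "\<bar>x $ i\<bar>" 1] x i by (simp add: abs_mult)
  then have "?M $$ (i, i) + (\<Sum>j\<in>?N. ?M $$ (i, j)) < 0"
    using sum_neighbours_balancing_matrix[OF E i, of x "\<lambda>_. 1"] deg i
    by (simp add: balancing_matrix_def)
  then show "\<exists>a<0. ?M $$ (i, i) = - (\<Sum>j\<in>?N. ?M $$ (i, j)) + a"
    by (intro exI[of _ "?M $$ (i, i) + (\<Sum>j\<in>?N. ?M $$ (i, j))"]) auto
qed

lemma balancing_matrix_eigenvector:
  assumes E: "simple_graph n E" and x: "balanced_sign_vector n E x"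
  shows "balancing_matrix n E x *\<^sub>v x = - (2 * real n + 1) \<cdot>\<^sub>v x"
proof -
  let ?M = "balancing_matrix n E x" and ?c = "- (2 * real n + 1)"
  have xc: "x \<in> carrier_vec n" and x_sign: "\<And>i. i < n \<Longrightarrow> x $ i \<in> {-1, 0, 1}"
    and x_balanced: "\<And>i. i < n \<Longrightarrow> x $ i = 0 \<Longrightarrow> neighbour_sum n E x i = 0"
    using x unfolding balanced_sign_vector_def by auto
  have M: "qualified_matrix n E ?M" using qualified_balancing_matrix[OF E] x_sign by force
  have "(?M *\<^sub>v x) $ i = ?c * x $ i" if i: "i < n" for i
  proof -
    have "(?M *\<^sub>v x) $ i = (?c - x $ i * neighbour_sum n E x i) * x $ i + neighbour_sum n E x i"
      using qualified_matrix_mult_vec_index[OF M E i xc] sum_neighbours_balancing_matrix[OF E i]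
      by (simp add: balancing_matrix_def neighbour_sum_def i)
    also have "\<dots> = ?c * x $ i"
      using x_sign[OF i] x_balanced[OF i] by (auto simp: algebra_simps)
    finally show ?thesis .
  qed
  then show ?thesis using xc by (intro eq_vecI) (auto simp: balancing_matrix_def)
qed

text \<open>On a 2-regular graph the choice is determined: the neighbour other than the one just left.\<close>

fun nonbacktracking_walk :: "(nat \<Rightarrow> nat \<Rightarrow> bool) \<Rightarrow> nat \<Rightarrow> nat \<Rightarrow> nat \<Rightarrow> nat" where
  "nonbacktracking_walk E v w 0 = v"
| "nonbacktracking_walk E v w (Suc 0) = w"
| "nonbacktracking_walk E v w (Suc (Suc k)) =
    (SOME x. E (nonbacktracking_walk E v w (Suc k)) x \<and> x \<noteq> nonbacktracking_walk E v w k)"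

declare nonbacktracking_walk.simps(3) [simp del]

locale cycle_walk =
  fixes n :: nat and E :: "nat \<Rightarrow> nat \<Rightarrow> bool" and v w :: nat
  assumes cycle: "cycle_graph n E" and start_edge: "E v w"
begin

abbreviation walk :: "nat \<Rightarrow> nat" where
  "walk \<equiv> nonbacktracking_walk E v w"

lemma simple: "simple_graph n E"
  using cycle unfolding cycle_graph_def by auto

lemma edge_sym: "E a b \<Longrightarrow> E b a"
  and edge_irrefl: "\<not> E a a"
  and edge_less: "E a b \<Longrightarrow> b < n"
  using simple unfolding simple_graph_def by auto

lemma neighbour_cases:
  assumes "E a b" "E a c" "b \<noteq> c" "E a d"
  shows "d = b \<or> d = c"
proof -
  have "a < n" using assms(1) edge_less edge_sym by blast
  then have "card {x. E a x} = 2" using cycle unfolding cycle_graph_def by auto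
  then show ?thesis using assms by (auto simp: card_2_iff set_eq_iff)
qed

lemma other_neighbour_exists:
  assumes "E a b"
  shows "\<exists>c. E a c \<and> c \<noteq> b"
proof -
  have "a < n" using assms edge_less edge_sym by blast
  then have "card {x. E a x} = 2" using cycle unfolding cycle_graph_def by auto
  then show ?thesis using assms by (auto simp: card_2_iff)
qed

lemma walk_Suc_Suc:
  assumes "E (walk k) (walk (Suc k))"
  shows "E (walk (Suc k)) (walk (Suc (Suc k))) \<and> walk (Suc (Suc k)) \<noteq> walk k"
  unfolding nonbacktracking_walk.simps(3)[of E v w k]
  by (rule someI_ex[OF other_neighbour_exists[OF edge_sym[OF assms]]])

lemma walk_edge: "E (walk k) (walk (Suc k))"
proof (induction k)
  case 0 then show ?case using start_edge by simp
next
  case (Suc k) then show ?case using walk_Suc_Suc by blast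
qed

lemma walk_nonbacktracking: "walk (Suc (Suc k)) \<noteq> walk k"
  using walk_Suc_Suc[OF walk_edge] by blast

lemma walk_less: "walk k < n"
  using walk_edge edge_less edge_sym by blast

lemma neighbour_of_walk_Suc:
  assumes "E (walk (Suc k)) b"
  shows "b = walk k \<or> b = walk (Suc (Suc k))"
  using neighbour_cases[OF edge_sym[OF walk_edge] walk_edge walk_nonbacktracking[symmetric] assms] .

lemma walk_first_repeat_at_start:
  assumes inj: "inj_on walk {..<m}" and i: "i < m" and repeat: "walk i = walk m"
  shows "i = 0"
proof (rule ccontr)
  assume "i \<noteq> 0"
  then obtain i' where i': "i = Suc i'" by (cases i) auto
  have "m \<noteq> Suc i" using walk_edge[of i] repeat edge_irrefl by auto
  moreover have "m \<noteq> Suc (Suc i)" using walk_nonbacktracking[of i] repeat by auto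
  ultimately have far: "Suc (Suc i) < m" using i by linarith
  have "E (walk (Suc i')) (walk (m - 1))"
    using walk_edge[of "m - 1"] edge_sym i' repeat far by simp
  then have "walk (m - 1) = walk i' \<or> walk (m - 1) = walk (Suc (Suc i'))"
    by (rule neighbour_of_walk_Suc)
  moreover have "m - 1 \<noteq> i'" and "m - 1 \<noteq> Suc (Suc i')" using i' far by auto
  ultimately show False using inj_onD[OF inj] i' far by fastforce
qed

lemma walk_returns:
  obtains m where "0 < m" "m \<le> n" "inj_on walk {..<m}" "walk m = v"
proof -
  have "\<not> inj_on walk {..n}"
  proof
    assume "inj_on walk {..n}"
    then have "card {..n} \<le> card {..<n}"
      using walk_less by (intro card_inj_on_le) auto
    then show False by simp
  qed
  then obtain i j where ij: "i < j" "j \<le> n" "walk i = walk j"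
    by (metis atMost_iff linorder_inj_onI')
  define repeats where "repeats m \<longleftrightarrow> (\<exists>i<m. walk i = walk m)" for m
  define m where "m = (LEAST m. repeats m)"
  have "repeats j" using ij unfolding repeats_def by auto
  then have m: "repeats m" "m \<le> j" unfolding m_def by (auto intro: LeastI Least_le)
  have inj: "inj_on walk {..<m}"
  proof (rule linorder_inj_onI')
    fix a b assume "a \<in> {..<m}" "b \<in> {..<m}" "a < b"
    then show "walk a \<noteq> walk b"
      using not_less_Least[of b repeats] unfolding m_def repeats_def by auto
  qed
  obtain i where "i < m" "walk i = walk m" using m(1) unfolding repeats_def by auto
  with inj have "i = 0" by (rule walk_first_repeat_at_start)
  then show ?thesis using that \<open>i < m\<close> \<open>walk i = walk m\<close> inj m(2) ij(2) by simp
qed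

lemma walk_image_closed:
  assumes m: "0 < m" and inj: "inj_on walk {..<m}" and return: "walk m = v"
    and a: "a \<in> walk ` {..<m}" and ab: "E a b"
  shows "b \<in> walk ` {..<m}"
proof -
  obtain k where k: "k < m" "a = walk k" using a by auto
  show ?thesis
  proof (cases k)
    case 0
    have "m \<noteq> 1" using return start_edge edge_irrefl by auto
    moreover have "m \<noteq> 2" using return walk_nonbacktracking[of 0] by (auto simp: numeral_2_eq_2)
    ultimately have "1 < m" "m - 1 \<noteq> 1" using m by auto
    then have "walk 1 \<noteq> walk (m - 1)" using inj_onD[OF inj] by fastforce
    moreover have "E v (walk (m - 1))" using walk_edge[of "m - 1"] return edge_sym m by simp
    ultimately have "b = walk 1 \<or> b = walk (m - 1)"
      using neighbour_cases[of v "walk 1"] start_edge ab k 0 by simp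
    then show ?thesis using \<open>1 < m\<close> by (auto intro: image_eqI[where x = 1])
  next
    case (Suc k')
    then have "b = walk k' \<or> b = walk (Suc k)" using neighbour_of_walk_Suc ab k by simp
    moreover have "walk (Suc k) \<in> walk ` {..<m}"
      using k return m by (cases "Suc k = m") (auto intro: image_eqI[of v walk 0])
    ultimately show ?thesis using k Suc by auto
  qed
qed

lemma walk_bij: "bij_betw walk {..<n} {..<n}"
  and walk_period: "walk n = v"
proof -
  obtain m where m: "0 < m" "m \<le> n" "inj_on walk {..<m}" "walk m = v" by (rule walk_returns)
  have "j \<in> walk ` {..<m}" if "j < n" for j
  proof -
    have "E\<^sup>*\<^sup>* v j" using cycle that walk_less[of 0] unfolding cycle_graph_def by auto
    then show ?thesis
    proof (induction rule: rtranclp_induct)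
      case base then show ?case using m(1) by (auto intro: image_eqI[of v walk 0])
    next
      case (step b c) then show ?case using walk_image_closed[OF m(1,3,4)] by blast
    qed
  qed
  then have "{..<n} \<subseteq> walk ` {..<m}" by auto
  moreover have "walk ` {..<m} \<subseteq> {..<n}" using walk_less by auto
  ultimately have image: "walk ` {..<m} = {..<n}" by auto
  then have "m = n" using card_image[OF m(3)] by simp
  then show "bij_betw walk {..<n} {..<n}" and "walk n = v"
    using image m unfolding bij_betw_def by auto
qed

lemma walk_surj_on:
  assumes "l < n"
  obtains j where "j < n" and "l = walk j"
  using assms bij_betw_imp_surj_on[OF walk_bij] by (metis imageE lessThan_iff)

lemma walk_1_ne_walk_pred_n: "walk 1 \<noteq> walk (n - 1)"
proof -
  have "n \<noteq> 1" using walk_period start_edge edge_irrefl by auto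
  moreover have "n \<noteq> 2" using walk_period walk_nonbacktracking[of 0] by (auto simp: numeral_2_eq_2)
  moreover have "n \<noteq> 0" using walk_less[of 0] by simp
  ultimately have "1 < n" "n - 1 \<noteq> 1" by auto
  then show ?thesis using bij_betw_imp_inj_on[OF walk_bij] by (fastforce dest: inj_onD)
qed

lemma neighbourhood_of_start: "{l. l < n \<and> E v l} = {walk 1, walk (n - 1)}"
proof -
  have "E (walk (n - 1)) v" using walk_edge[of "n - 1"] walk_period walk_less[of 0] by simp
  then show ?thesis
    using neighbour_cases[OF _ _ walk_1_ne_walk_pred_n] start_edge edge_sym edge_less walk_less by auto
qed

lemma neighbourhood_of_walk_Suc:
  "{l. l < n \<and> E (walk (Suc j)) l} = {walk j, walk (Suc (Suc j))}"
  using neighbour_of_walk_Suc walk_edge edge_sym walk_less by blast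

lemma zero_forcing:
  assumes M: "qualified_matrix n E M" and y: "y \<in> carrier_vec n"
    and silent: "\<forall>k<n. (M ^\<^sub>m k *\<^sub>v y) $ v = 0 \<and> (M ^\<^sub>m k *\<^sub>v y) $ w = 0"
  shows "y = 0\<^sub>v n"
proof -
  have Mc: "M \<in> carrier_mat n n" by (rule qualified_matrix_carrier[OF M])
  define z where "z k = M ^\<^sub>m k *\<^sub>v y" for k
  have z: "z k \<in> carrier_vec n" for k using Mc unfolding z_def carrier_vec_def by simp
  have zS: "z (Suc k) = M *\<^sub>v z k" for k unfolding z_def by (rule pow_mat_Suc_mult_vec[OF Mc y])
  define forced where "forced j \<longleftrightarrow> (\<forall>k. k + j < n \<longrightarrow> z k $ walk j = 0)" for j
  have "forced j \<and> forced (Suc j)" for j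
  proof (induction j)
    case 0 then show ?case using silent by (simp add: forced_def z_def)
  next
    case (Suc j)
    let ?a = "walk j" and ?i = "walk (Suc j)" and ?b = "walk (Suc (Suc j))"
    \<comment> \<open>In row ?i of z (Suc k) = M z k only ?b is not yet known to vanish, and M $$ (?i, ?b) > 0.\<close>
    have "z k $ ?b = 0" if k: "k + Suc (Suc j) < n" for k
    proof -
      have "z (Suc k) $ ?i = M $$ (?i, ?i) * z k $ ?i + (\<Sum>l\<in>{?a, ?b}. M $$ (?i, l) * z k $ l)"
        unfolding zS neighbourhood_of_walk_Suc[symmetric]
        by (rule qualified_matrix_mult_vec_index[OF M simple walk_less z])
      also have "\<dots> = M $$ (?i, ?i) * z k $ ?i + M $$ (?i, ?a) * z k $ ?a + M $$ (?i, ?b) * z k $ ?b"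
        using walk_nonbacktracking[of j] by simp
      finally have "z (Suc k) $ ?i = \<dots>" .
      moreover have "z (Suc k) $ ?i = 0" "z k $ ?i = 0" "z k $ ?a = 0"
        using Suc k unfolding forced_def by auto
      moreover have "M $$ (?i, ?b) > 0" using qualified_matrix_edge[OF M simple walk_edge] .
      ultimately show ?thesis by simp
    qed
    then show ?case using Suc unfolding forced_def by auto
  qed
  moreover have "z 0 = y" using Mc y by (simp add: z_def)
  ultimately have "y $ walk j = 0" if "j < n" for j using that unfolding forced_def by fastforce
  then have "y $ l = 0" if "l < n" for l using that by (metis walk_surj_on)
  then show ?thesis using y by (intro eq_vecI) auto
qed

lemma walk_index_of_remote_vertex:
  assumes t: "t < n" and "t \<noteq> v" and "\<not> E v t"
  obtains p where "2 \<le> p" and "Suc p < n" and "walk p = t"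
proof -
  obtain p where p: "p < n" "walk p = t" using walk_surj_on[OF t] by metis
  have "p \<noteq> 0" using p assms(2) by (metis nonbacktracking_walk.simps(1))
  moreover have "p \<noteq> 1" using p assms(3) start_edge by (metis One_nat_def nonbacktracking_walk.simps(2))
  moreover have "p \<noteq> n - 1"
    using walk_edge[of "n - 1"] walk_period p assms edge_sym by (metis Suc_pred' gr_zeroI less_nat_zero_code)
  ultimately show ?thesis using p by (intro that) auto
qed

lemma remote_vertex_balanced_sign_vector:
  assumes "t < n" and "t \<noteq> v" and "\<not> E v t"
  obtains x where "balanced_sign_vector n E x" "x \<noteq> 0\<^sub>v n" "x $ v = 0" "x $ t = 0"
proof -
  obtain p where p: "2 \<le> p" "Suc p < n" "walk p = t"
    using walk_index_of_remote_vertex assms by blast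
  define sign :: "nat \<Rightarrow> real" where
    "sign j = (if 0 < j \<and> j < p then 1 else if p < j then -1 else 0)" for j
  define x where "x = vec n (\<lambda>l. sign (the_inv_into {..<n} walk l))"
  have x_walk: "x $ walk j = sign j" if "j < n" for j
    using that walk_less bij_betw_imp_inj_on[OF walk_bij] by (simp add: x_def the_inv_into_f_f)
  have "x $ l \<in> {-1, 0, 1}" if "l < n" for l
    using walk_surj_on[OF that] x_walk by (metis sign_def insert_iff)
  moreover have "(\<Sum>l | l < n \<and> E i l. x $ l) = 0" if "i < n" "x $ i = 0" for i
  proof -
    obtain j where j: "j < n" "i = walk j" using walk_surj_on \<open>i < n\<close> by blast
    then have "j = 0 \<or> j = p" using \<open>x $ i = 0\<close> x_walk by (auto simp: sign_def split: if_splits)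
    then show ?thesis
    proof
      assume "j = 0"
      moreover have "x $ walk 1 = 1" and "x $ walk (n - 1) = -1"
        using x_walk[of 1] x_walk[of "n - 1"] p by (auto simp: sign_def)
      ultimately show ?thesis using j walk_1_ne_walk_pred_n by (simp add: neighbourhood_of_start)
    next
      assume "j = p"
      then have "i = walk (Suc (p - 1))" using j p by simp
      then show ?thesis
        using p x_walk walk_nonbacktracking[of "p - 1"]
        by (simp only: neighbourhood_of_walk_Suc) (simp add: sign_def)
    qed
  qed
  moreover have "x \<noteq> 0\<^sub>v n" using x_walk[of 1] p walk_less[of 1] by (auto simp: sign_def)
  moreover have "x $ v = 0" and "x $ t = 0" using x_walk[of 0] x_walk[of p] p by (auto simp: sign_def)
  moreover have "x \<in> carrier_vec n" by (simp add: x_def)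
  ultimately show ?thesis using that unfolding balanced_sign_vector_def neighbour_sum_def by blast
qed

lemma SSC_start_edge: "SSC n E [v, w]"
proof -
  have inputs: "set [v, w] \<subseteq> {..<n}" using walk_less[of 0] walk_less[of 1] by simp
  show ?thesis unfolding SSC_iff_vanishing_orbit_trivial[OF inputs] using zero_forcing by simp
qed

lemma not_SSC_remote_vertex:
  assumes "t < n" and "t \<noteq> v" and "\<not> E v t"
  shows "\<not> SSC n E [v, t]"
proof
  assume ssc: "SSC n E [v, t]"
  obtain x where x: "balanced_sign_vector n E x" "x \<noteq> 0\<^sub>v n" "x $ v = 0" "x $ t = 0"
    using remote_vertex_balanced_sign_vector assms by metis
  then have xc: "x \<in> carrier_vec n" unfolding balanced_sign_vector_def by simp
  define M where "M = balancing_matrix n E x"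
  have M: "qualified_matrix n E M"
    using qualified_balancing_matrix[OF simple] x(1) unfolding M_def balanced_sign_vector_def by force
  have "M ^\<^sub>m k *\<^sub>v x = (- (2 * real n + 1)) ^ k \<cdot>\<^sub>v x" for k
    using pow_mat_mult_eigenvector[OF qualified_matrix_carrier[OF M] xc]
      balancing_matrix_eigenvector[OF simple x(1)] unfolding M_def by blast
  then have "\<forall>k<n. \<forall>u\<in>set [v, t]. (M ^\<^sub>m k *\<^sub>v x) $ u = 0"
    using x xc assms(1) walk_less[of 0] by simp
  moreover have "set [v, t] \<subseteq> {..<n}" using assms(1) walk_less[of 0] by simp
  ultimately have "x = 0\<^sub>v n" using ssc M xc SSC_iff_vanishing_orbit_trivial by blast
  with x(2) show False ..
qed

end

lemma cycle_graph_has_neighbour: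
  assumes "cycle_graph n E" and "v < n"
  obtains w where "E v w"
proof -
  have "card {w. E v w} = 2" using assms unfolding cycle_graph_def by blast
  then show ?thesis using that by (metis card.empty empty_Collect_eq zero_neq_numeral)
qed

theorem theorem3:
  fixes n :: nat and E :: "nat \<Rightarrow> nat \<Rightarrow> bool" and v1 v2 :: nat
  assumes "n \<ge> 3" and "cycle_graph n E"
    and "v1 < n" and "v2 < n" and "v1 \<noteq> v2"
  shows "SSC n E [v1, v2] \<longleftrightarrow> E v1 v2"
  \<comment> \<open>The hypothesis n \<ge> 3 is implied by cycle_graph n E and not needed.\<close>
proof
  assume ssc: "SSC n E [v1, v2]"
  show "E v1 v2"
  proof (rule ccontr)
    assume nonadjacent: "\<not> E v1 v2"
    obtain w where "E v1 w" using cycle_graph_has_neighbour assms(2,3) .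
    with assms(2) interpret cycle_walk n E v1 w by unfold_locales
    show False using not_SSC_remote_vertex[OF assms(4) assms(5)[symmetric] nonadjacent] ssc ..
  qed
next
  assume "E v1 v2"
  with assms(2) interpret cycle_walk n E v1 v2 by unfold_locales
  show "SSC n E [v1, v2]" by (rule SSC_start_edge)
qed

end
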